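(* Let $\varphi$ be a hexagonal grid whose reference triangle $T=(A,B,C)$ is nondegenerate and counterclockwise. Then every triangle of the grid that is nondegenerate and counterclockwise (as listed in the grid) has second isodynamic point equal to $X_{16}(T)$.
   Context: Let $\zeta=e^{i\pi/3}$ and $\Lambda=\{m+n\zeta: m,n\in\mathbb{Z}\}$. Call $p,q\in\Lambda$ adjacent if $|p-q|=1$, and let $\mathcal{E}$ be the set of unordered pairs $\{p,q\}$ of adjacent lattice points. A hexagonal grid is a map $\varphi:\mathcal{E}\to\mathbb{C}$ such that for every $p\in\Lambda$ there exist $c_p,r_p\in\mathbb{C}$ with $\varphi(\{p,p+\zeta^k\})=c_p+r_p\zeta^k$ for $k=0,\dots,5$. Thus the six points form a regular, possibly degenerate, hexagon $H_p$ listed counterclockwise. For each set $\{p,q,s\}\subset\Lambda$ of three pairwise adjacent lattice points listed counterclockwise, the corresponding triangle of the grid is $(\varphi(\{p,q\}),\varphi(\{q,s\}),\varphi(\{s,p\}))$. The reference triangle of $\varphi$ is $(\varphi(\{0,1\}),\varphi(\{1,\zeta\}),\varphi(\{\zeta,0\}))$. For a nondegenerate triangle with vertices $V_1,V_2,V_3$, let $\ell_i$ be the length of the side opposite $V_i$ and $\theta_i$ the angle at $V_i$. Its second isodynamic point $X_{16}$ has homogeneous barycentric coordinates $(\ell_1\sin(\theta_1-\pi/3):\ell_2\sin(\theta_2-\pi/3):\ell_3\sin(\theta_3-\pi/3))$. *)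

theory Defs
  imports "HOL-Analysis.Analysis"
begin

definition zeta :: complex where
  "zeta = exp (\<i> * of_real (pi / 3))"

definition Lambda :: "complex set" where
  "Lambda = {of_int m + of_int n * zeta | m n. True}"

definition adjacent :: "complex \<Rightarrow> complex \<Rightarrow> bool" where
  "adjacent p q \<longleftrightarrow> cmod (p - q) = 1"

text \<open>A grid assigns a point to each unordered pair {p,q} of adjacent lattice points;
  values on other sets are irrelevant.\<close>
definition hex_grid :: "(complex set \<Rightarrow> complex) \<Rightarrow> bool" where
  "hex_grid \<phi> \<longleftrightarrow> (\<forall>p\<in>Lambda. \<exists>c r. \<forall>k<(6::nat). \<phi> {p, p + zeta ^ k} = c + r * zeta ^ k)"

definition orient :: "complex \<Rightarrow> complex \<Rightarrow> complex \<Rightarrow> real" where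
  "orient a b c = Im (cnj (b - a) * (c - a))"

definition nondegenerate :: "complex \<Rightarrow> complex \<Rightarrow> complex \<Rightarrow> bool" where
  "nondegenerate a b c \<longleftrightarrow> orient a b c \<noteq> 0"

definition ccw :: "complex \<Rightarrow> complex \<Rightarrow> complex \<Rightarrow> bool" where
  "ccw a b c \<longleftrightarrow> orient a b c > 0"

definition tri_angle :: "complex \<Rightarrow> complex \<Rightarrow> complex \<Rightarrow> real" where
  "tri_angle a b c = arccos (Re (cnj (b - a) * (c - a)) / (cmod (b - a) * cmod (c - a)))"

definition x16_weight :: "complex \<Rightarrow> complex \<Rightarrow> complex \<Rightarrow> real" where
  "x16_weight a b c = cmod (b - c) * sin (tri_angle a b c - pi / 3)"

text \<open>Homogeneous (projective) representation of the point with barycentric coordinates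
  (w1:w2:w3): the pair (w1 V1 + w2 V2 + w3 V3, w1 + w2 + w3), determined up to a nonzero
  real factor.  If the weight sum is nonzero, the affine point is the quotient.\<close>
definition X16_hom :: "complex \<Rightarrow> complex \<Rightarrow> complex \<Rightarrow> complex \<times> real" where
  "X16_hom a b c =
    (let w1 = x16_weight a b c; w2 = x16_weight b c a; w3 = x16_weight c a b
     in (of_real w1 * a + of_real w2 * b + of_real w3 * c, w1 + w2 + w3))"

definition same_proj_point :: "complex \<times> real \<Rightarrow> complex \<times> real \<Rightarrow> bool" where
  "same_proj_point u v \<longleftrightarrow> (\<exists>t::real. t \<noteq> 0 \<and> fst u = of_real t * fst v \<and> snd u = t * snd v)"

end

theory Submission
  imports Defs
begin

text \<open>On each hexagon \<open>H\<^sub>p\<close> the grid is an affine function of the edge direction, and such a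
  function is fixed by two of its values.  Neighbouring hexagons share edges, so matching three
  values around the reference triangle propagates to the whole lattice: every edge \<open>{p, q}\<close> is
  mapped to \<open>\<alpha> p q + \<gamma> (p + q) + \<delta>\<close>.  Completing the square, the grid triangle on the
  lattice triangle \<open>(p, p + w, p + \<zeta> w)\<close> is the image under \<open>z \<mapsto> \<alpha> w\<^sup>2 z + (\<delta> - \<gamma>\<^sup>2/\<alpha>)\<close>
  of the triangle \<open>(P (P + 1), (P + 1) (P + \<zeta>), (P + \<zeta>) P)\<close> with \<open>P = (p + \<gamma>/\<alpha>) / w\<close>.  A
  polynomial identity shows that the second isodynamic point of the latter is always 0, and
  \<open>X\<^sub>1\<^sub>6\<close> commutes with similarities; hence every grid triangle has \<open>X\<^sub>1\<^sub>6 = \<delta> - \<gamma>\<^sup>2/\<alpha>\<close>.\<close>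

lemma zeta_eq: "zeta = Complex (1/2) (sqrt 3 / 2)"
  unfolding zeta_def cis_conv_exp[symmetric] by (simp add: complex_eq_iff cos_60 sin_60)

lemma Re_zeta [simp]: "Re zeta = 1/2" and Im_zeta [simp]: "Im zeta = sqrt 3 / 2"
  by (simp_all add: zeta_eq)

lemma cmod_zeta [simp]: "cmod zeta = 1"
  by (simp add: zeta_def)

lemma zeta_nonzero [simp]: "zeta \<noteq> 0"
  using cmod_zeta by force

lemma zeta_times_zeta: "zeta * zeta = zeta - 1"
  by (simp add: complex_eq_iff)

lemma zeta_powers: "zeta ^ 2 = zeta - 1" "zeta ^ 3 = -1" "zeta ^ 6 = 1"
proof -
  show sq: "zeta ^ 2 = zeta - 1" unfolding power2_eq_square by (rule zeta_times_zeta)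
  have "zeta ^ 3 = (zeta * zeta) * zeta" by (simp add: power3_eq_cube)
  also have "\<dots> = zeta * zeta - zeta" by (simp add: zeta_times_zeta algebra_simps)
  finally show cube: "zeta ^ 3 = -1" by (simp add: zeta_times_zeta)
  show "zeta ^ 6 = 1" using power_mult[of zeta 3 2] cube by simp
qed

lemma zeta_power_mod: "zeta ^ (k mod 6) = zeta ^ k"
proof -
  have "zeta ^ k = (zeta ^ 6) ^ (k div 6) * zeta ^ (k mod 6)"
    unfolding power_mult[symmetric] power_add[symmetric] by simp
  then show ?thesis by (simp add: zeta_powers)
qed

lemma same_proj_point_sym:
  assumes "same_proj_point u v" shows "same_proj_point v u"
proof -
  obtain t where "t \<noteq> 0" "fst u = of_real t * fst v" "snd u = t * snd v"
    using assms unfolding same_proj_point_def by blast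
  then show ?thesis
    unfolding same_proj_point_def by (intro exI[of _ "1 / t"]) simp
qed

lemma same_proj_point_trans:
  assumes "same_proj_point u v" "same_proj_point v w" shows "same_proj_point u w"
proof -
  obtain s where "s \<noteq> 0" "fst u = of_real s * fst v" "snd u = s * snd v"
    using assms(1) unfolding same_proj_point_def by blast
  moreover obtain t where "t \<noteq> 0" "fst v = of_real t * fst w" "snd v = t * snd w"
    using assms(2) unfolding same_proj_point_def by blast
  ultimately show ?thesis
    unfolding same_proj_point_def by (intro exI[of _ "s * t"]) simp
qed

lemma same_proj_point_scale:
  "t \<noteq> 0 \<Longrightarrow> same_proj_point (of_real t * x, t * w) (x, w)"
  unfolding same_proj_point_def by auto

section \<open>Barycentric weights of the second isodynamic point\<close>

definition x16_numerator :: "complex \<Rightarrow> complex \<Rightarrow> complex \<Rightarrow> real" where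
  "x16_numerator a b c = cmod (b - c)^2 * (orient a b c - sqrt 3 * Re (cnj (b - a) * (c - a)))"

lemma x16_numerator_coords:
  "x16_numerator a b c = ((Re (b - c))\<^sup>2 + (Im (b - c))\<^sup>2) *
     ((Re (b - a) * Im (c - a) - Im (b - a) * Re (c - a))
      - sqrt 3 * (Re (b - a) * Re (c - a) + Im (b - a) * Im (c - a)))"
  by (simp add: x16_numerator_def orient_def cmod_power2 algebra_simps)

definition side_product :: "complex \<Rightarrow> complex \<Rightarrow> complex \<Rightarrow> real" where
  "side_product a b c = cmod (b - c) * cmod (c - a) * cmod (a - b)"

lemma orient_rotate: "orient b c a = orient a b c"
  by (simp add: orient_def algebra_simps)

lemma orient_nonzero_distinct:
  assumes "orient a b c \<noteq> 0" shows "a \<noteq> b" "b \<noteq> c" "c \<noteq> a"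
  using assms by (auto simp: orient_def algebra_simps)

lemma x16_weight_eq:
  assumes "orient a b c > 0"
  shows "x16_weight a b c = x16_numerator a b c / (2 * side_product a b c)"
proof -
  define z where "z = cnj (b - a) * (c - a)"
  have Im_z: "Im z > 0" using assms by (simp add: orient_def z_def)
  then have z_pos: "cmod z > 0" by auto
  have cmod_z: "cmod (b - a) * cmod (c - a) = cmod z" unfolding z_def by (metis complex_mod_cnj norm_mult)
  have Re_bound: "\<bar>Re z / cmod z\<bar> \<le> 1" using abs_Re_le_cmod[of z] z_pos by (simp add: abs_div)
  have angle: "tri_angle a b c = arccos (Re z / cmod z)"
    unfolding tri_angle_def cmod_z z_def ..
  have cos_angle: "cos (tri_angle a b c) = Re z / cmod z"
    using Re_bound by (simp add: angle cos_arccos_abs)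
  have "(Re z)\<^sup>2 + (Im z)\<^sup>2 = (cmod z)\<^sup>2" by (simp add: cmod_power2)
  then have "1 - (Re z / cmod z)\<^sup>2 = (Im z / cmod z)\<^sup>2"
    using z_pos by (simp add: field_simps)
  then have sin_angle: "sin (tri_angle a b c) = Im z / cmod z"
    using Re_bound Im_z z_pos by (simp add: angle sin_arccos_abs)
  have sin_shift: "sin (tri_angle a b c - pi/3) = (Im z - sqrt 3 * Re z) / (2 * cmod z)"
    using z_pos unfolding sin_diff sin_angle cos_angle cos_60 sin_60 by (simp add: field_simps)
  have numer: "x16_numerator a b c = cmod (b - c)^2 * (Im z - sqrt 3 * Re z)"
    unfolding x16_numerator_def orient_def z_def ..
  show ?thesis
    unfolding x16_weight_def sin_shift numer side_product_def norm_minus_commute[of a b]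
      cmod_z[symmetric]
    using orient_nonzero_distinct[of a b c] assms by (simp add: field_simps power2_eq_square)
qed

definition X16_poly :: "complex \<Rightarrow> complex \<Rightarrow> complex \<Rightarrow> complex \<times> real" where
  "X16_poly a b c =
    (of_real (x16_numerator a b c) * a + of_real (x16_numerator b c a) * b
       + of_real (x16_numerator c a b) * c,
     x16_numerator a b c + x16_numerator b c a + x16_numerator c a b)"

lemma X16_hom_same_X16_poly:
  assumes "orient a b c > 0"
  shows "same_proj_point (X16_hom a b c) (X16_poly a b c)"
proof -
  have "orient b c a > 0" "orient c a b > 0" using assms orient_rotate by metis+
  moreover have "side_product b c a = side_product a b c" "side_product c a b = side_product a b c"
    by (simp_all add: side_product_def)
  moreover have "side_product a b c > 0"
    using orient_nonzero_distinct[of a b c] assms by (simp add: side_product_def)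
  ultimately show ?thesis
    unfolding same_proj_point_def X16_hom_def X16_poly_def Let_def
    using assms x16_weight_eq
    by (intro exI[of _ "1 / (2 * side_product a b c)"]) (simp add: algebra_simps add_divide_distrib)
qed

lemma cnj_mult_affine:
  "cnj (l * b + e - (l * a + e)) * (l * c + e - (l * a + e))
     = of_real ((cmod l)\<^sup>2) * (cnj (b - a) * (c - a))"
proof -
  have "cnj (l * b + e - (l * a + e)) * (l * c + e - (l * a + e)) = (l * cnj l) * (cnj (b - a) * (c - a))"
    by (simp add: algebra_simps)
  then show ?thesis by (simp only: complex_norm_square)
qed

lemma orient_affine: "orient (l * a + e) (l * b + e) (l * c + e) = (cmod l)\<^sup>2 * orient a b c"
  unfolding orient_def cnj_mult_affine by simp

lemma x16_numerator_affine:
  "x16_numerator (l * a + e) (l * b + e) (l * c + e) = (cmod l)^4 * x16_numerator a b c"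
proof -
  have "cmod (l * b + e - (l * c + e)) = cmod l * cmod (b - c)"
    by (simp add: norm_mult[symmetric] algebra_simps)
  then show ?thesis unfolding x16_numerator_def orient_def cnj_mult_affine
    by (simp add: algebra_simps power2_eq_square eval_nat_numeral)
qed

lemma X16_poly_affine:
  "X16_poly (l * a + e) (l * b + e) (l * c + e) =
     (of_real ((cmod l)^4) * (l * fst (X16_poly a b c) + of_real (snd (X16_poly a b c)) * e),
      (cmod l)^4 * snd (X16_poly a b c))"
  unfolding X16_poly_def x16_numerator_affine by (simp add: algebra_simps)

lemma x16_numerator_equilateral:
  "x16_numerator 1 (1 + zeta) zeta = 0" "x16_numerator (1 + zeta) zeta 1 = 0"
  "x16_numerator zeta 1 (1 + zeta) = 0"
  by (simp_all add: x16_numerator_coords algebra_simps power2_eq_square)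

lemma normal_form_weights:
  fixes P :: complex
  defines "T1 \<equiv> P * (P + 1)" and "T2 \<equiv> (P + 1) * (P + zeta)" and "T3 \<equiv> (P + zeta) * P"
  shows "of_real (x16_numerator T1 T2 T3) * T1 + of_real (x16_numerator T2 T3 T1) * T2
           + of_real (x16_numerator T3 T1 T2) * T3 = 0"
    and "x16_numerator T1 T2 T3 + x16_numerator T2 T3 T1 + x16_numerator T3 T1 T2
           = 2 * orient T1 T2 T3"
proof -
  obtain x y where P: "P = Complex x y" by (cases P)
  define s where "s = sqrt 3"
  have s3: "s * (s * t) = 3 * t" for t by (simp add: s_def mult.assoc[symmetric])
  have diffs: "T2 - T1 = zeta * (P + 1)" "T3 - T1 = (zeta - 1) * P" "T2 - T3 = P + zeta"
    "T3 - T2 = -(P + zeta)" "T1 - T2 = -(zeta * (P + 1))" "T1 - T3 = -((zeta - 1) * P)"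
    by (simp_all add: T1_def T2_def T3_def algebra_simps)
  have w1: "x16_numerator T1 T2 T3 = 2 * y * ((x + 1/2)\<^sup>2 + (y + s/2)\<^sup>2)"
    and w2: "x16_numerator T2 T3 T1 = (x\<^sup>2 + y\<^sup>2) * (- y - s * (x + 1))"
    and w3: "x16_numerator T3 T1 T2 = ((x + 1)\<^sup>2 + y\<^sup>2) * (s * x - y)"
    and o: "orient T1 T2 T3 = (s * (x\<^sup>2 + y\<^sup>2 + x) + y) / 2"
    unfolding x16_numerator_coords orient_def diffs
    by (simp_all add: P s_def[symmetric] algebra_simps power2_eq_square s3, (simp add: field_simps)?)
  have T: "Re T1 = x\<^sup>2 + x - y\<^sup>2" "Im T1 = 2 * x * y + y"
    "Re T2 = (x + 1) * (x + 1/2) - y * (y + s/2)" "Im T2 = (x + 1) * (y + s/2) + y * (x + 1/2)"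
    "Re T3 = x * (x + 1/2) - y * (y + s/2)" "Im T3 = x * (y + s/2) + y * (x + 1/2)"
    by (simp_all add: T1_def T2_def T3_def P s_def[symmetric] field_simps power2_eq_square)
  show "of_real (x16_numerator T1 T2 T3) * T1 + of_real (x16_numerator T2 T3 T1) * T2
           + of_real (x16_numerator T3 T1 T2) * T3 = 0"
    unfolding complex_eq_iff by (simp add: w1 w2 w3 T algebra_simps power2_eq_square s3, (simp add: field_simps)?)
  show "x16_numerator T1 T2 T3 + x16_numerator T2 T3 T1 + x16_numerator T3 T1 T2
           = 2 * orient T1 T2 T3"
    unfolding w1 w2 w3 o by (simp add: algebra_simps power2_eq_square s3, (simp add: field_simps)?)
qed

section \<open>Triangles of a symmetric bilinear edge form\<close>

definition edge_form :: "complex \<Rightarrow> complex \<Rightarrow> complex \<Rightarrow> complex \<Rightarrow> complex \<Rightarrow> complex" where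
  "edge_form \<alpha> \<gamma> \<delta> p q = \<alpha> * p * q + \<gamma> * (p + q) + \<delta>"

lemma edge_form_commute: "edge_form \<alpha> \<gamma> \<delta> p q = edge_form \<alpha> \<gamma> \<delta> q p"
  by (simp add: edge_form_def algebra_simps)

lemma edge_form_affine: "edge_form \<alpha> \<gamma> \<delta> p (p + u) = edge_form \<alpha> \<gamma> \<delta> p p + (\<alpha> * p + \<gamma>) * u"
  by (simp add: edge_form_def algebra_simps)

text \<open>For \<open>\<alpha> = 0\<close> every grid triangle is equilateral; there \<open>X\<^sub>1\<^sub>6\<close> is undefined and
  \<open>X16_hom\<close> degenerates to \<open>(0, 0)\<close>.\<close>

definition edge_form_center :: "complex \<Rightarrow> complex \<Rightarrow> complex \<Rightarrow> complex \<times> real" where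
  "edge_form_center \<alpha> \<gamma> \<delta> = (if \<alpha> = 0 then (0, 0) else (\<delta> - \<gamma>\<^sup>2 / \<alpha>, 1))"

lemma X16_equilateral:
  assumes "orient (l * 1 + e) (l * (1 + zeta) + e) (l * zeta + e) > 0"
  shows "same_proj_point (X16_hom (l * 1 + e) (l * (1 + zeta) + e) (l * zeta + e)) (0, 0)"
proof -
  have "X16_poly (l * 1 + e) (l * (1 + zeta) + e) (l * zeta + e) = (0, 0)"
    unfolding X16_poly_affine by (simp add: X16_poly_def x16_numerator_equilateral)
  then show ?thesis using X16_hom_same_X16_poly[OF assms] by simp
qed

lemma X16_normal_form_image:
  fixes P :: complex
  defines "T1 \<equiv> P * (P + 1)" and "T2 \<equiv> (P + 1) * (P + zeta)" and "T3 \<equiv> (P + zeta) * P"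
  assumes ccw: "orient (l * T1 + e) (l * T2 + e) (l * T3 + e) > 0"
  shows "same_proj_point (X16_hom (l * T1 + e) (l * T2 + e) (l * T3 + e)) (e, 1)"
proof -
  define k where "k = (cmod l)^4 * (2 * orient T1 T2 T3)"
  have "l \<noteq> 0"
  proof
    assume "l = 0"
    then show False using ccw by (simp add: orient_def)
  qed
  moreover have "orient T1 T2 T3 > 0"
    using ccw unfolding orient_affine by (simp add: zero_less_mult_iff)
  ultimately have "k \<noteq> 0" by (simp add: k_def)
  have "X16_poly (l * T1 + e) (l * T2 + e) (l * T3 + e) = (of_real k * e, k * 1)"
    unfolding X16_poly_affine using normal_form_weights[of P] by (simp add: X16_poly_def k_def T1_def T2_def T3_def)
  then have "same_proj_point (X16_hom (l * T1 + e) (l * T2 + e) (l * T3 + e)) (of_real k * e, k * 1)"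
    using X16_hom_same_X16_poly[OF ccw] by (simp only:)
  then show ?thesis
    using same_proj_point_scale[OF \<open>k \<noteq> 0\<close>] by (rule same_proj_point_trans)
qed

lemma X16_edge_form_triangle:
  fixes \<alpha> \<gamma> \<delta> p w :: complex
  defines "F \<equiv> edge_form \<alpha> \<gamma> \<delta>"
  assumes ccw: "orient (F p (p + w)) (F (p + w) (p + zeta * w)) (F (p + zeta * w) p) > 0"
  shows "same_proj_point (X16_hom (F p (p + w)) (F (p + w) (p + zeta * w)) (F (p + zeta * w) p))
           (edge_form_center \<alpha> \<gamma> \<delta>)"
proof (cases "\<alpha> = 0")
  case True
  define l e where "l = \<gamma> * w" and "e = 2 * \<gamma> * p + \<delta>"
  have "F p (p + w) = l * 1 + e" "F (p + w) (p + zeta * w) = l * (1 + zeta) + e"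
    "F (p + zeta * w) p = l * zeta + e"
    by (simp_all add: F_def edge_form_def True l_def e_def algebra_simps)
  then show ?thesis using X16_equilateral[of l e] ccw by (simp add: edge_form_center_def True)
next
  case False
  have "w \<noteq> 0"
  proof
    assume "w = 0"
    then show False using ccw by (simp add: orient_def)
  qed
  define l e P where "l = \<alpha> * w\<^sup>2" and "e = \<delta> - \<gamma>\<^sup>2 / \<alpha>" and "P = (p + \<gamma> / \<alpha>) / w"
  \<comment> \<open>\<open>\<alpha> p q + \<gamma> (p + q) + \<delta> = \<alpha> (p + \<gamma>/\<alpha>) (q + \<gamma>/\<alpha>) + e\<close>\<close>
  have "F p (p + w) = l * (P * (P + 1)) + e" "F (p + w) (p + zeta * w) = l * ((P + 1) * (P + zeta)) + e"
    "F (p + zeta * w) p = l * ((P + zeta) * P) + e"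
    using False \<open>w \<noteq> 0\<close>
    by (simp_all add: F_def edge_form_def l_def e_def P_def field_simps power2_eq_square)
  then show ?thesis
    using X16_normal_form_image[of l P e] ccw by (simp add: edge_form_center_def False e_def)
qed

definition hex_units :: "complex set" where
  "hex_units = range (\<lambda>k. zeta ^ k)"

lemma zeta_power_hex_units: "zeta ^ k \<in> hex_units"
  by (simp add: hex_units_def)

lemma hex_units_mult: "u \<in> hex_units \<Longrightarrow> v \<in> hex_units \<Longrightarrow> u * v \<in> hex_units"
  unfolding hex_units_def by (auto simp: power_add[symmetric])

lemma hex_units_uminus: "u \<in> hex_units \<Longrightarrow> - u \<in> hex_units"
  using hex_units_mult[OF zeta_power_hex_units[of 3]] by (simp add: zeta_powers)

lemma hex_units_nonzero: "u \<in> hex_units \<Longrightarrow> u \<noteq> 0"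
  by (auto simp: hex_units_def)

lemma hex_units_explicit:
  "{1, zeta, zeta - 1, -1, -zeta, 1 - zeta} \<subseteq> hex_units"
proof -
  have "zeta ^ 4 = -zeta" "zeta ^ 5 = 1 - zeta"
    using power_add[of zeta 3 1] power_add[of zeta 3 2] zeta_powers by (simp_all add: algebra_simps)
  then show ?thesis
    using zeta_power_hex_units[of 0] zeta_power_hex_units[of 1] zeta_power_hex_units[of 2]
      zeta_power_hex_units[of 3] zeta_power_hex_units[of 4] zeta_power_hex_units[of 5] zeta_powers
    by auto
qed

lemma Lambda_intI: "of_int m + of_int n * zeta \<in> Lambda"
  unfolding Lambda_def by blast

lemma LambdaE:
  assumes "p \<in> Lambda" obtains m n where "p = of_int m + of_int n * zeta"
  using assms unfolding Lambda_def by blast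

lemma Lambda_add: "p \<in> Lambda \<Longrightarrow> q \<in> Lambda \<Longrightarrow> p + q \<in> Lambda"
proof (elim LambdaE)
  fix m n m' n'
  assume "p = of_int m + of_int n * zeta" "q = of_int m' + of_int n' * zeta"
  then have "p + q = of_int (m + m') + of_int (n + n') * zeta" by (simp add: algebra_simps)
  then show "p + q \<in> Lambda" by (metis Lambda_intI)
qed

lemma Lambda_diff: "p \<in> Lambda \<Longrightarrow> q \<in> Lambda \<Longrightarrow> q - p \<in> Lambda"
proof (elim LambdaE)
  fix m n m' n'
  assume "p = of_int m + of_int n * zeta" "q = of_int m' + of_int n' * zeta"
  then have "q - p = of_int (m' - m) + of_int (n' - n) * zeta" by (simp add: algebra_simps)
  then show "q - p \<in> Lambda" by (metis Lambda_intI)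
qed

lemma Lambda_mult_zeta: "p \<in> Lambda \<Longrightarrow> zeta * p \<in> Lambda"
proof (elim LambdaE)
  fix m n
  assume "p = of_int m + of_int n * zeta"
  then have "zeta * p = of_int m * zeta + of_int n * (zeta * zeta)" by (simp add: algebra_simps)
  then have "zeta * p = of_int (- n) + of_int (m + n) * zeta"
    unfolding zeta_times_zeta by (simp add: algebra_simps)
  then show "zeta * p \<in> Lambda" by (metis Lambda_intI)
qed

lemma hex_units_Lambda: "u \<in> hex_units \<Longrightarrow> u \<in> Lambda"
proof -
  have "zeta ^ k \<in> Lambda" for k
  proof (induction k)
    case 0
    show ?case using Lambda_intI[of 1 0] by simp
  next
    case (Suc k)
    then show ?case using Lambda_mult_zeta by simp
  qed
  then show "u \<in> hex_units \<Longrightarrow> u \<in> Lambda" by (auto simp: hex_units_def)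
qed

lemma unit_lattice_point:
  assumes "z \<in> Lambda" "cmod z = 1" shows "z \<in> hex_units"
proof -
  obtain m n where z: "z = of_int m + of_int n * zeta" using assms(1) by (rule LambdaE)
  have "(cmod z)\<^sup>2 = 1" using assms(2) by simp
  then have "(of_int m + of_int n / 2)\<^sup>2 + (of_int n * sqrt 3 / 2)\<^sup>2 = (1::real)"
    by (simp add: cmod_power2 z)
  then have "real_of_int (m * m + m * n + n * n) = 1"
    by (simp add: power2_eq_square field_simps)
  then have norm: "m * m + m * n + n * n = 1" by linarith
  then have "(2 * m + n)\<^sup>2 + 3 * n\<^sup>2 = 4" "(2 * n + m)\<^sup>2 + 3 * m\<^sup>2 = 4"
    by (simp_all add: power2_eq_square algebra_simps)
  then have "n\<^sup>2 \<le> 1" "m\<^sup>2 \<le> 1" by (smt (verit) zero_le_power2)+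
  then have "\<bar>n\<bar> \<le> 1" "\<bar>m\<bar> \<le> 1" by (simp_all add: abs_square_le_1)
  then have "n \<in> {-1, 0, 1}" "m \<in> {-1, 0, 1}" by auto
  then show ?thesis using norm hex_units_explicit by (auto simp: z)
qed

lemma equilateral_ccw_apex:
  assumes "cmod (q - p) = 1" "cmod (s - q) = 1" "cmod (s - p) = 1" "orient p q s > 0"
  shows "s = p + zeta * (q - p)"
proof -
  define w v where "w = q - p" and "v = s - p"
  define z where "z = cnj w * v"
  have "cmod z = 1" using assms(1,3) unfolding z_def w_def v_def by (metis complex_mod_cnj mult_1 norm_mult)
  then have cmod_z: "(Re z)\<^sup>2 + (Im z)\<^sup>2 = 1" using cmod_power2[of z] by simp
  have "(cmod (v - w))\<^sup>2 = (cmod v)\<^sup>2 + (cmod w)\<^sup>2 - 2 * Re z"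
    unfolding cmod_power2 by (simp add: z_def power2_eq_square algebra_simps)
  then have Re_z: "Re z = 1/2" using assms(1-3) by (simp add: v_def w_def)
  have "(Im z)\<^sup>2 = (sqrt 3 / 2)\<^sup>2" using cmod_z Re_z by (simp add: power_divide)
  moreover have "Im z > 0" using assms(4) by (simp add: orient_def z_def w_def v_def)
  ultimately have "Im z = sqrt 3 / 2" by (simp add: power2_eq_iff_nonneg)
  then have "z = zeta" using Re_z by (simp add: complex_eq_iff)
  moreover have "w * cnj w = 1" using complex_norm_square[of w] assms(1) by (simp add: w_def)
  ultimately have "v = zeta * w" unfolding z_def by (metis mult.assoc mult.commute mult_1)
  then show ?thesis by (simp add: v_def w_def algebra_simps)
qed

section \<open>Hexagonal grids are edge forms\<close>

lemma hex_grid_hexagon: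
  assumes "hex_grid \<phi>" "p \<in> Lambda"
  obtains c r where "\<And>u. u \<in> hex_units \<Longrightarrow> \<phi> {p, p + u} = c + r * u"
proof -
  obtain c r where "\<forall>k<6. \<phi> {p, p + zeta ^ k} = c + r * zeta ^ k"
    using assms unfolding hex_grid_def by blast
  then have "\<phi> {p, p + zeta ^ k} = c + r * zeta ^ k" for k
    using zeta_power_mod[of k] by (metis mod_less_divisor zero_less_numeral)
  then show ?thesis using that unfolding hex_units_def by blast
qed

definition grid_agrees_at :: "(complex set \<Rightarrow> complex) \<Rightarrow> (complex \<Rightarrow> complex \<Rightarrow> complex) \<Rightarrow> complex \<Rightarrow> bool" where
  "grid_agrees_at \<phi> F p \<longleftrightarrow> (\<forall>u\<in>hex_units. \<phi> {p, p + u} = F p (p + u))"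

lemma affine_eq_by_two_points:
  fixes a b c d u v x :: "'a :: field"
  assumes "a + b * u = c + d * u" "a + b * v = c + d * v" "u \<noteq> v"
  shows "a + b * x = c + d * x"
proof -
  have "b * (u - v) = (a + b * u) - (a + b * v)" by (simp add: algebra_simps)
  also have "\<dots> = (c + d * u) - (c + d * v)" using assms(1,2) by simp
  also have "\<dots> = d * (u - v)" by (simp add: algebra_simps)
  finally have "b = d" using assms(3) by simp
  then show ?thesis using assms(1) by simp
qed

lemma grid_agrees_atI:
  assumes grid: "hex_grid \<phi>" and "p \<in> Lambda" "u \<in> hex_units" "v \<in> hex_units" "u \<noteq> v"
    and "\<phi> {p, p + u} = edge_form \<alpha> \<gamma> \<delta> p (p + u)" "\<phi> {p, p + v} = edge_form \<alpha> \<gamma> \<delta> p (p + v)"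
  shows "grid_agrees_at \<phi> (edge_form \<alpha> \<gamma> \<delta>) p"
proof -
  obtain c r where hexagon: "\<And>u. u \<in> hex_units \<Longrightarrow> \<phi> {p, p + u} = c + r * u"
    using hex_grid_hexagon[OF grid \<open>p \<in> Lambda\<close>] by blast
  have "c + r * u = edge_form \<alpha> \<gamma> \<delta> p p + (\<alpha> * p + \<gamma>) * u"
    using hexagon[of u] assms(3,6) by (simp add: edge_form_affine)
  moreover have "c + r * v = edge_form \<alpha> \<gamma> \<delta> p p + (\<alpha> * p + \<gamma>) * v"
    using hexagon[of v] assms(4,7) by (simp add: edge_form_affine)
  ultimately have "c + r * x = edge_form \<alpha> \<gamma> \<delta> p p + (\<alpha> * p + \<gamma>) * x" for x
    using affine_eq_by_two_points \<open>u \<noteq> v\<close> by blast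
  then show ?thesis
    unfolding grid_agrees_at_def edge_form_affine by (simp add: hexagon)
qed

lemma grid_agrees_at_common_neighbour:
  assumes grid: "hex_grid \<phi>" and "p \<in> Lambda" "u \<in> hex_units" "v \<in> hex_units" "u \<noteq> v"
    and "grid_agrees_at \<phi> (edge_form \<alpha> \<gamma> \<delta>) (p + u)" "grid_agrees_at \<phi> (edge_form \<alpha> \<gamma> \<delta>) (p + v)"
  shows "grid_agrees_at \<phi> (edge_form \<alpha> \<gamma> \<delta>) p"
proof (rule grid_agrees_atI[OF grid \<open>p \<in> Lambda\<close> \<open>u \<in> hex_units\<close> \<open>v \<in> hex_units\<close> \<open>u \<noteq> v\<close>])
  have reverse_edge: "\<phi> {p, p + x} = edge_form \<alpha> \<gamma> \<delta> p (p + x)"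
    if "x \<in> hex_units" "grid_agrees_at \<phi> (edge_form \<alpha> \<gamma> \<delta>) (p + x)" for x
  proof -
    have "\<phi> {p + x, p + x + - x} = edge_form \<alpha> \<gamma> \<delta> (p + x) (p + x + - x)"
      using that hex_units_uminus unfolding grid_agrees_at_def by blast
    then show ?thesis by (simp add: insert_commute edge_form_commute)
  qed
  show "\<phi> {p, p + u} = edge_form \<alpha> \<gamma> \<delta> p (p + u)" "\<phi> {p, p + v} = edge_form \<alpha> \<gamma> \<delta> p (p + v)"
    using reverse_edge assms by blast+
qed

lemma grid_agrees_at_rotate:
  assumes grid: "hex_grid \<phi>" and "p \<in> Lambda" "u \<in> hex_units"
    and "grid_agrees_at \<phi> (edge_form \<alpha> \<gamma> \<delta>) p" "grid_agrees_at \<phi> (edge_form \<alpha> \<gamma> \<delta>) (p + u)"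
  shows "grid_agrees_at \<phi> (edge_form \<alpha> \<gamma> \<delta>) (p + zeta * u)"
proof (rule grid_agrees_at_common_neighbour[OF grid, of _ "- (zeta * u)" "(1 - zeta) * u"])
  show "- (zeta * u) \<in> hex_units"
    using hex_units_uminus[OF hex_units_mult[OF zeta_power_hex_units[of 1] assms(3)]] by simp
  have "zeta ^ 5 = 1 - zeta"
    using power_add[of zeta 3 2] zeta_powers by (simp add: algebra_simps)
  then show "(1 - zeta) * u \<in> hex_units"
    using hex_units_mult[OF zeta_power_hex_units[of 5] assms(3)] by simp
  show "p + zeta * u \<in> Lambda"
    using assms(2,3) by (simp add: Lambda_add Lambda_mult_zeta hex_units_Lambda)
  show "- (zeta * u) \<noteq> (1 - zeta) * u"
    using hex_units_nonzero[OF assms(3)] by (simp add: algebra_simps)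
qed (use assms in \<open>simp_all add: algebra_simps\<close>)

lemma grid_agrees_at_neighbours:
  assumes grid: "hex_grid \<phi>" and "p \<in> Lambda" "u \<in> hex_units" "v \<in> hex_units"
    and "grid_agrees_at \<phi> (edge_form \<alpha> \<gamma> \<delta>) p" "grid_agrees_at \<phi> (edge_form \<alpha> \<gamma> \<delta>) (p + u)"
  shows "grid_agrees_at \<phi> (edge_form \<alpha> \<gamma> \<delta>) (p + v)"
proof -
  have rotated: "grid_agrees_at \<phi> (edge_form \<alpha> \<gamma> \<delta>) (p + zeta ^ k * u)" for k
  proof (induction k)
    case (Suc k)
    then show ?case
      using grid_agrees_at_rotate[OF grid \<open>p \<in> Lambda\<close> hex_units_mult[OF zeta_power_hex_units \<open>u \<in> hex_units\<close>]]
        assms(5) by (simp add: mult.assoc)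
  qed (use assms(6) in simp)
  obtain i j where "u = zeta ^ i" "v = zeta ^ j"
    using assms(3,4) unfolding hex_units_def by blast
  then have "v = zeta ^ (j + (6 - i mod 6)) * u"
    by (simp add: zeta_power_mod[of i, symmetric] power_add[symmetric] power_add[of zeta j 6] zeta_powers)
  then show ?thesis using rotated by simp
qed

lemma grid_agrees_everywhere:
  assumes grid: "hex_grid \<phi>"
    and "grid_agrees_at \<phi> (edge_form \<alpha> \<gamma> \<delta>) 0" "grid_agrees_at \<phi> (edge_form \<alpha> \<gamma> \<delta>) 1"
    and "p \<in> Lambda"
  shows "grid_agrees_at \<phi> (edge_form \<alpha> \<gamma> \<delta>) p"
proof -
  \<comment> \<open>Agreement at both ends of a lattice edge spreads to all neighbours of either end,
    so it can be carried across the lattice along translates of the edge \<open>{0, 1}\<close>.\<close>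
  define Q where "Q a \<longleftrightarrow> grid_agrees_at \<phi> (edge_form \<alpha> \<gamma> \<delta>) a \<and> grid_agrees_at \<phi> (edge_form \<alpha> \<gamma> \<delta>) (a + 1)" for a
  have one: "1 \<in> hex_units" and minus_one: "- 1 \<in> hex_units"
    using zeta_power_hex_units[of 0] hex_units_uminus by auto
  have step: "Q (a + v)" if "Q a" "a \<in> Lambda" "v \<in> hex_units" for a v
  proof -
    have "grid_agrees_at \<phi> (edge_form \<alpha> \<gamma> \<delta>) (a + v)"
      using that grid_agrees_at_neighbours[OF grid _ one] unfolding Q_def by blast
    moreover have "grid_agrees_at \<phi> (edge_form \<alpha> \<gamma> \<delta>) (a + 1 + v)"
      using that grid_agrees_at_neighbours[OF grid _ minus_one, of "a + 1" v] hex_units_Lambda[OF one]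
      unfolding Q_def by (simp add: Lambda_add)
    ultimately show ?thesis unfolding Q_def by (simp add: add_ac)
  qed
  have zeta_units: "zeta \<in> hex_units" "- zeta \<in> hex_units"
    using zeta_power_hex_units[of 1] hex_units_uminus by auto
  have real_axis: "Q (of_int m)" for m
  proof (induction m rule: int_induct[where k = 0])
    case base
    then show ?case using assms(2,3) by (simp add: Q_def)
  next
    case (step1 i)
    then show ?case using step[OF _ Lambda_intI[of i 0] one] by simp
  next
    case (step2 i)
    then show ?case using step[OF _ Lambda_intI[of i 0] minus_one] by simp
  qed
  have "Q (of_int m + of_int n * zeta)" for m n
  proof (induction n rule: int_induct[where k = 0])
    case base
    then show ?case using real_axis by simp
  next
    case (step1 i)
    then show ?case using step[OF _ Lambda_intI[of m i] zeta_units(1)] by (simp add: algebra_simps)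
  next
    case (step2 i)
    then show ?case using step[OF _ Lambda_intI[of m i] zeta_units(2)] by (simp add: algebra_simps)
  qed
  then show ?thesis using \<open>p \<in> Lambda\<close> unfolding Q_def by (metis LambdaE)
qed

lemma hex_grid_edge_form:
  assumes grid: "hex_grid \<phi>"
  obtains \<alpha> \<gamma> \<delta> where "\<And>p. p \<in> Lambda \<Longrightarrow> grid_agrees_at \<phi> (edge_form \<alpha> \<gamma> \<delta>) p"
proof -
  define \<gamma> where "\<gamma> = (\<phi> {0, zeta} - \<phi> {0, 1}) / (zeta - 1)"
  define \<delta> where "\<delta> = \<phi> {0, 1} - \<gamma>"
  define \<alpha> where "\<alpha> = (\<phi> {1, zeta} - \<gamma> * (1 + zeta) - \<delta>) / zeta"
  have "zeta - 1 \<noteq> 0" by (simp add: complex_eq_iff)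
  have "grid_agrees_at \<phi> (edge_form \<alpha> \<gamma> \<delta>) 0"
  proof (rule grid_agrees_atI[OF grid, of _ 1 zeta])
    show "0 \<in> Lambda" using Lambda_intI[of 0 0] by simp
    show "1 \<in> hex_units" "zeta \<in> hex_units"
      using zeta_power_hex_units[of 0] zeta_power_hex_units[of 1] by simp_all
    show "1 \<noteq> zeta" by (simp add: complex_eq_iff)
    show "\<phi> {0, 0 + 1} = edge_form \<alpha> \<gamma> \<delta> 0 (0 + 1)" by (simp add: edge_form_def \<delta>_def)
    have "\<gamma> * zeta + \<delta> = \<gamma> * (zeta - 1) + \<phi> {0, 1}" by (simp add: \<delta>_def algebra_simps)
    also have "\<dots> = \<phi> {0, zeta}" using \<open>zeta - 1 \<noteq> 0\<close> by (simp add: \<gamma>_def)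
    finally show "\<phi> {0, 0 + zeta} = edge_form \<alpha> \<gamma> \<delta> 0 (0 + zeta)" by (simp add: edge_form_def)
  qed
  moreover have "grid_agrees_at \<phi> (edge_form \<alpha> \<gamma> \<delta>) 1"
  proof (rule grid_agrees_atI[OF grid, of _ "- 1" "zeta - 1"])
    show "1 \<in> Lambda" using Lambda_intI[of 1 0] by simp
    show "- 1 \<in> hex_units" "zeta - 1 \<in> hex_units"
      using hex_units_explicit by auto
    show "- 1 \<noteq> zeta - 1" by (simp add: complex_eq_iff)
    show "\<phi> {1, 1 + - 1} = edge_form \<alpha> \<gamma> \<delta> 1 (1 + - 1)"
      by (simp add: edge_form_def \<delta>_def insert_commute)
    show "\<phi> {1, 1 + (zeta - 1)} = edge_form \<alpha> \<gamma> \<delta> 1 (1 + (zeta - 1))"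
      by (simp add: edge_form_def \<alpha>_def)
  qed
  ultimately show ?thesis using that grid_agrees_everywhere[OF grid] by blast
qed

lemma grid_edge_value:
  assumes "\<And>p. p \<in> Lambda \<Longrightarrow> grid_agrees_at \<phi> F p" "p \<in> Lambda" "q \<in> Lambda" "adjacent p q"
  shows "\<phi> {p, q} = F p q"
proof -
  have "q - p \<in> hex_units"
    using assms(2-4) by (intro unit_lattice_point Lambda_diff) (simp_all add: adjacent_def norm_minus_commute)
  then show ?thesis using assms(1)[OF \<open>p \<in> Lambda\<close>] unfolding grid_agrees_at_def by force
qed

lemma X16_grid_triangle:
  assumes agrees: "\<And>x. x \<in> Lambda \<Longrightarrow> grid_agrees_at \<phi> (edge_form \<alpha> \<gamma> \<delta>) x"
    and lattice: "p \<in> Lambda" "q \<in> Lambda" "s \<in> Lambda"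
    and adjacent: "adjacent p q" "adjacent q s" "adjacent s p"
    and "ccw p q s" and ccw_image: "ccw (\<phi> {p, q}) (\<phi> {q, s}) (\<phi> {s, p})"
  shows "same_proj_point (X16_hom (\<phi> {p, q}) (\<phi> {q, s}) (\<phi> {s, p})) (edge_form_center \<alpha> \<gamma> \<delta>)"
proof -
  have "s = p + zeta * (q - p)"
    using adjacent \<open>ccw p q s\<close>
    by (intro equilateral_ccw_apex) (simp_all add: adjacent_def ccw_def norm_minus_commute)
  moreover have "\<phi> {p, q} = edge_form \<alpha> \<gamma> \<delta> p q" "\<phi> {q, s} = edge_form \<alpha> \<gamma> \<delta> q s"
    "\<phi> {s, p} = edge_form \<alpha> \<gamma> \<delta> s p"
    using grid_edge_value[OF agrees] lattice adjacent by blast+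
  ultimately show ?thesis
    using X16_edge_form_triangle[of \<alpha> \<gamma> \<delta> p "q - p"] ccw_image by (simp add: ccw_def)
qed

theorem mainTheorem7:
  fixes \<phi> :: "complex set \<Rightarrow> complex"
  assumes grid: "hex_grid \<phi>"
    and "nondegenerate (\<phi> {0, 1}) (\<phi> {1, zeta}) (\<phi> {zeta, 0})"
    and refccw: "ccw (\<phi> {0, 1}) (\<phi> {1, zeta}) (\<phi> {zeta, 0})"
  shows "\<forall>p q s. p \<in> Lambda \<and> q \<in> Lambda \<and> s \<in> Lambda \<and>
           adjacent p q \<and> adjacent q s \<and> adjacent s p \<and> ccw p q s \<and>
           nondegenerate (\<phi> {p, q}) (\<phi> {q, s}) (\<phi> {s, p}) \<and>
           ccw (\<phi> {p, q}) (\<phi> {q, s}) (\<phi> {s, p}) \<longrightarrow>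
           same_proj_point (X16_hom (\<phi> {p, q}) (\<phi> {q, s}) (\<phi> {s, p}))
                           (X16_hom (\<phi> {0, 1}) (\<phi> {1, zeta}) (\<phi> {zeta, 0}))"
proof (intro allI impI)
  fix p q s
  obtain \<alpha> \<gamma> \<delta> where agrees: "\<And>x. x \<in> Lambda \<Longrightarrow> grid_agrees_at \<phi> (edge_form \<alpha> \<gamma> \<delta>) x"
    using hex_grid_edge_form[OF grid] by blast
  have "0 \<in> Lambda" "1 \<in> Lambda" "zeta \<in> Lambda"
    using Lambda_intI[of 0 0] Lambda_intI[of 1 0] Lambda_intI[of 0 1] by simp_all
  moreover have "adjacent 0 1" "adjacent 1 zeta" "adjacent zeta 0" "ccw 0 1 zeta"
    by (simp_all add: adjacent_def ccw_def orient_def cmod_def power2_eq_square)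
  ultimately have reference:
    "same_proj_point (X16_hom (\<phi> {0, 1}) (\<phi> {1, zeta}) (\<phi> {zeta, 0})) (edge_form_center \<alpha> \<gamma> \<delta>)"
    using X16_grid_triangle[OF agrees] refccw by blast
  assume "p \<in> Lambda \<and> q \<in> Lambda \<and> s \<in> Lambda \<and>
           adjacent p q \<and> adjacent q s \<and> adjacent s p \<and> ccw p q s \<and>
           nondegenerate (\<phi> {p, q}) (\<phi> {q, s}) (\<phi> {s, p}) \<and>
           ccw (\<phi> {p, q}) (\<phi> {q, s}) (\<phi> {s, p})"
  then have "same_proj_point (X16_hom (\<phi> {p, q}) (\<phi> {q, s}) (\<phi> {s, p})) (edge_form_center \<alpha> \<gamma> \<delta>)"
    using X16_grid_triangle[OF agrees] by blast
  then show "same_proj_point (X16_hom (\<phi> {p, q}) (\<phi> {q, s}) (\<phi> {s, p}))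
                             (X16_hom (\<phi> {0, 1}) (\<phi> {1, zeta}) (\<phi> {zeta, 0}))"
    using reference same_proj_point_sym same_proj_point_trans by blast
qed

end
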